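(* (a) For any alphabet and any words $x,y$, if $y\in x\,\text{ш}\,x^R$ then $y$ is an abelian square. (b) If $y\in\{0,1\}^*$ is an abelian square, then there exists a word $x\in\{0,1\}^*$ such that $y\in x\,\text{ш}\,x^R$.
   Context: $x^R$ denotes the reversal of $x$. For words $x,y$, the (ordinary) shuffle $x \,\text{ш}\, y$ is the finite set of all words $z = x_1y_1x_2y_2\cdots x_ny_n$ for some $n\ge 1$ and words $x_1,\dots,x_n,y_1,\dots,y_n$ (possibly empty) with $x=x_1\cdots x_n$ and $y=y_1\cdots y_n$. An abelian square is a word of the form $uu'$ where $u'$ is a permutation (rearrangement of the letters) of $u$. *)

theory Defs
  imports Main "HOL-Library.Multiset"
begin

definition shuffle :: "'a list \<Rightarrow> 'a list \<Rightarrow> 'a list set" where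
  "shuffle x y = {z. \<exists>xs ys :: 'a list list.
      length xs \<ge> 1 \<and> length ys = length xs \<and>
      x = concat xs \<and> y = concat ys \<and>
      z = concat (map (\<lambda>(a, b). a @ b) (zip xs ys))}"

definition abelian_square :: "'a list \<Rightarrow> bool" where
  "abelian_square w \<longleftrightarrow> (\<exists>u u'. w = u @ u' \<and> mset u' = mset u)"

end

theory Submission
  imports Defs
begin

(* A word z lies in the shuffle of x and y exactly when z can be
   written as a list of letters each labelled True ("taken from x") or False
   ("taken from y"), such that the True-labelled letters spell x and the
   False-labelled letters spell y.  From this labelling characterisation we
   derive three general facts about shuffles: the letters of z are those of x
   and y together; a prefix of z is a shuffle of a prefix of x and a prefix of
   y; and shuffles are closed under concatenation, any word being a shuffle of
   its P- and non-P-letters.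
   (a) If z is a shuffle of x and rev x with |x| = n, the first n letters of z
   are a prefix take i x together with a prefix of rev x of length n - i,
   i.e. rev (drop i x); so they are a permutation of x, and so is the rest.
   (b) For a binary abelian square u u', send the 0s of u and the 1s of u' to
   x = 0^a 1^b and the rest to 1^b 0^a = rev x. *)

definition left_part :: "('a \<times> bool) list \<Rightarrow> 'a list" where
  "left_part ps = map fst (filter snd ps)"

definition right_part :: "('a \<times> bool) list \<Rightarrow> 'a list" where
  "right_part ps = map fst (filter (\<lambda>p. \<not> snd p) ps)"

definition label_pair :: "'a list \<times> 'a list \<Rightarrow> ('a \<times> bool) list" where
  "label_pair p = map (\<lambda>c. (c, True)) (fst p) @ map (\<lambda>c. (c, False)) (snd p)"

lemma label_pieces:
  assumes "length xs = length ys"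
  defines "ps \<equiv> concat (map label_pair (zip xs ys))"
  shows "map fst ps = concat (map (\<lambda>(a, b). a @ b) (zip xs ys))"
    and "left_part ps = concat xs"
    and "right_part ps = concat ys"
  using assms unfolding ps_def
  by (induction xs ys rule: list_induct2)
     (simp_all add: label_pair_def left_part_def right_part_def filter_map comp_def)

lemma shuffle_iff_labelling:
  "z \<in> shuffle x y \<longleftrightarrow>
     (\<exists>ps. z = map fst ps \<and> x = left_part ps \<and> y = right_part ps)"
proof
  assume "z \<in> shuffle x y"
  then obtain xs ys where "length ys = length xs" "x = concat xs" "y = concat ys"
      "z = concat (map (\<lambda>(a, b). a @ b) (zip xs ys))"
    unfolding shuffle_def by blast
  then show "\<exists>ps. z = map fst ps \<and> x = left_part ps \<and> y = right_part ps"
    using label_pieces[of xs ys] by metis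
next
  assume "\<exists>ps. z = map fst ps \<and> x = left_part ps \<and> y = right_part ps"
  then obtain ps where ps: "z = map fst ps" "x = left_part ps" "y = right_part ps"
    by blast
  (* one-letter pieces, padded by an empty pair so that there is at least one *)
  define xs where "xs = map (\<lambda>p. if snd p then [fst p] else []) ps @ [[]]"
  define ys where "ys = map (\<lambda>p. if snd p then [] else [fst p]) ps @ [[]]"
  have "concat xs = x" "concat ys = y"
    using ps unfolding xs_def ys_def left_part_def right_part_def
    by (induction ps arbitrary: x y z) auto
  moreover have "concat (map (\<lambda>(a, b). a @ b) (zip xs ys)) = z"
    using ps(1) unfolding xs_def ys_def by (induction ps arbitrary: z) auto
  moreover have "length xs \<ge> 1" "length ys = length xs"
    by (simp_all add: xs_def ys_def)
  ultimately show "z \<in> shuffle x y"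
    unfolding shuffle_def by blast
qed

lemma mset_shuffle:
  assumes "z \<in> shuffle x y"
  shows "mset z = mset x + mset y"
proof -
  obtain ps where "z = map fst ps" "x = left_part ps" "y = right_part ps"
    using assms shuffle_iff_labelling by blast
  moreover have "mset (map fst ps) = mset (left_part ps) + mset (right_part ps)"
    unfolding left_part_def right_part_def by (induction ps) auto
  ultimately show ?thesis by simp
qed

lemma left_part_take: "left_part (take n ps) = take (length (left_part (take n ps))) (left_part ps)"
  and right_part_take: "right_part (take n ps) = take (length (right_part (take n ps))) (right_part ps)"
  unfolding left_part_def right_part_def
  by (metis append_eq_conv_conj append_take_drop_id filter_append map_append)+

lemma shuffle_take:
  assumes "z \<in> shuffle x y" and "n \<le> length z"
  shows "\<exists>i j. i + j = n \<and> take n z \<in> shuffle (take i x) (take j y)"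
proof -
  obtain ps where ps: "z = map fst ps" "x = left_part ps" "y = right_part ps"
    using assms(1) shuffle_iff_labelling by blast
  define i where "i = length (left_part (take n ps))"
  define j where "j = length (right_part (take n ps))"
  have "i + j = length (take n ps)"
    unfolding i_def j_def left_part_def right_part_def
    by (simp add: sum_length_filter_compl)
  also have "\<dots> = n" using assms(2) ps(1) by simp
  finally have "i + j = n" .
  moreover have "take n z = map fst (take n ps)" "take i x = left_part (take n ps)"
      "take j y = right_part (take n ps)"
    using ps left_part_take[of n ps] right_part_take[of n ps] i_def j_def
    by (simp_all add: take_map)
  ultimately show ?thesis
    using shuffle_iff_labelling by blast
qed

lemma shuffle_append:
  assumes "z \<in> shuffle x y" and "z' \<in> shuffle x' y'"
  shows "z @ z' \<in> shuffle (x @ x') (y @ y')"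
proof -
  obtain ps where "z = map fst ps" "x = left_part ps" "y = right_part ps"
    using assms(1) shuffle_iff_labelling by blast
  moreover obtain ps' where "z' = map fst ps'" "x' = left_part ps'" "y' = right_part ps'"
    using assms(2) shuffle_iff_labelling by blast
  ultimately show ?thesis
    unfolding shuffle_iff_labelling left_part_def right_part_def
    by (intro exI[of _ "ps @ ps'"]) simp
qed

lemma filter_shuffle: "w \<in> shuffle (filter P w) (filter (\<lambda>a. \<not> P a) w)"
  unfolding shuffle_iff_labelling left_part_def right_part_def
  by (intro exI[of _ "map (\<lambda>c. (c, P c)) w"]) (simp add: filter_map comp_def)

theorem shuffle_rev_abelian_square:
  assumes "z \<in> shuffle x (rev x)"
  shows "abelian_square z"
proof -
  define n where "n = length x"
  have mset_z: "mset z = mset x + mset x"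
    using mset_shuffle[OF assms] by simp
  then have "length z = n + n"
    unfolding n_def by (metis size_mset size_union)
  then obtain i j where ij: "i + j = n" and
    prefix: "take n z \<in> shuffle (take i x) (take j (rev x))"
    using shuffle_take[OF assms, of n] by auto
  have "take j (rev x) = rev (drop i x)"
  proof -
    have "length x - j = i" using ij unfolding n_def by simp
    then show ?thesis by (simp add: take_rev)
  qed
  then have "mset (take n z) = mset (take i x) + mset (drop i x)"
    using mset_shuffle[OF prefix] by simp
  then have "mset (take n z) = mset x"
    by (metis append_take_drop_id mset_append)
  moreover have "mset z = mset (take n z) + mset (drop n z)"
    by (metis append_take_drop_id mset_append)
  ultimately have "mset (drop n z) = mset (take n z)"
    using mset_z by simp
  then show ?thesis
    unfolding abelian_square_def by (metis append_take_drop_id)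
qed

(* Over the binary alphabet a word is determined up to permutation by its
   letter counts, so both halves of u u' have the same blocks of 0s and 1s. *)
theorem binary_abelian_square_shuffle_rev:
  assumes "abelian_square (y :: bool list)"
  shows "\<exists>x. y \<in> shuffle x (rev x)"
proof -
  obtain u u' where y: "y = u @ u'" and perm: "mset u' = mset u"
    using assms unfolding abelian_square_def by blast
  define zeros where "zeros = filter ((=) False) u"
  define ones where "ones = filter ((=) True) u"
  have halves: "filter ((=) b) u' = filter ((=) b) u" for b
    using perm by (metis replicate_count_mset_eq_filter_eq)
  have complement: "filter (\<lambda>c. \<not> b = c) w = filter ((=) (\<not> b)) w" for b w
    by (rule filter_cong) auto
  have "u \<in> shuffle zeros ones"
    using filter_shuffle[of u "(=) False"] unfolding zeros_def ones_def complement by simp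
  moreover have "u' \<in> shuffle ones zeros"
    using filter_shuffle[of u' "(=) True"] unfolding zeros_def ones_def complement halves
    by simp
  ultimately have "y \<in> shuffle (zeros @ ones) (ones @ zeros)"
    unfolding y by (rule shuffle_append)
  moreover have "rev zeros = zeros" "rev ones = ones"
    unfolding zeros_def ones_def by (metis rev_replicate replicate_count_mset_eq_filter_eq)+
  ultimately have "y \<in> shuffle (zeros @ ones) (rev (zeros @ ones))"
    by simp
  then show ?thesis by blast
qed

theorem mainTheorem4:
  shows "(\<forall>(x :: 'a list) y. y \<in> shuffle x (rev x) \<longrightarrow> abelian_square y)
    \<and> (\<forall>y :: bool list. abelian_square y \<longrightarrow> (\<exists>x. y \<in> shuffle x (rev x)))"
  using shuffle_rev_abelian_square binary_abelian_square_shuffle_rev by blast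

end
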